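(* Let $\gamma_k=\frac{\gamma_0}{(k+1)^a}$ and $\lambda_k=\frac{\lambda_0}{(k+1)^b}$ for $k\ge0$, where $a,b,\gamma_0,\lambda_0$ are positive scalars with $\gamma_0\lambda_0\le 2m/\mu_h$, and let $r<1$. Let $\{x_k\}$ and $\{\bar x_N\}$ be generated by the IR-IG method with these sequences and averaging parameter $r$. If $a>b$, $a>0.5$, $a+b<1$ and $ar\le1$, then $\bar x_N\to x_h^*$ as $N\to\infty$.
   Context: Standing setup: $X\subset\mathbb{R}^n$ is nonempty, compact and convex. $f_1,\dots,f_m:\mathbb{R}^n\to\mathbb{R}$ are convex (possibly nondifferentiable) functions and $f=\sum_{i=1}^m f_i$. $h:\mathbb{R}^n\to\mathbb{R}$ is strongly convex with parameter $\mu_h>0$ (possibly nondifferentiable). Let $X^*=\arg\min_{x\in X}f(x)$ and let $x_h^*$ be the unique minimizer of $h$ over $X^*$. $\mathcal{P}_X$ denotes Euclidean projection onto $X$. IR-IG method: given $x_0\in X$, positive sequences $\{\gamma_k\}$, $\{\lambda_k\}$ and a constant $r<1$, for each $k\ge0$ set $x_{k,0}=x_k$; for $i=0,\dots,m-1$ pick any $g_{f_{i+1}}(x_{k,i})\in\partial f_{i+1}(x_{k,i})$ and $g_h(x_{k,i})\in\partial h(x_{k,i})$ and set $x_{k,i+1}=\mathcal{P}_X\big(x_{k,i}-\gamma_k\big(g_{f_{i+1}}(x_{k,i})+\tfrac{\lambda_k}{m}g_h(x_{k,i})\big)\big)$; then set $x_{k+1}=x_{k,m}$. The averaged iterates are $\bar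 x_N=\sum_{k=0}^{N-1}\gamma_k^r x_k\big/\sum_{k=0}^{N-1}\gamma_k^r$ for $N\ge1$. *)

theory Defs
  imports "HOL-Analysis.Analysis"
begin

definition is_subgradient :: "('a::real_inner \<Rightarrow> real) \<Rightarrow> 'a \<Rightarrow> 'a \<Rightarrow> bool" where
  "is_subgradient f x g \<longleftrightarrow> (\<forall>y. f y \<ge> f x + inner g (y - x))"

definition strongly_convex :: "real \<Rightarrow> ('a::real_normed_vector \<Rightarrow> real) \<Rightarrow> bool" where
  "strongly_convex mu h \<longleftrightarrow>
     (\<forall>x y t. 0 \<le> t \<and> t \<le> 1 \<longrightarrow>
        h ((1 - t) *\<^sub>R x + t *\<^sub>R y) \<le> (1 - t) * h x + t * h y - mu / 2 * t * (1 - t) * (norm (x - y))\<^sup>2)"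

definition argmin_set :: "('a \<Rightarrow> real) \<Rightarrow> 'a set \<Rightarrow> 'a set" where
  "argmin_set F X = {x \<in> X. \<forall>y\<in>X. F x \<le> F y}"

end

theory Submission
  imports Defs
begin

text \<open>One cycle of the method is an incremental projected subgradient cycle for the
  regularized objective F + \<lambda>_k h, where F is the sum of the f_i. With D_k the squared
  distance from x_k to x_h*, this gives
  2 \<gamma>_k ((F(x_k) - F(x_h*)) + \<lambda>_k (h(x_k) - h(x_h*))) \<le> D_k - D_(k+1) + C \<gamma>_k^2.
  Multiplying by \<gamma>_k^(r-1), resp. by \<gamma>_k^(r-1) / \<lambda>_k after dropping the nonnegative
  optimality gap, and summing by parts, the \<gamma>_k^r-weighted averages of both gaps
  F - F(x_h*) and h - h(x_h*) eventually fall below any positive level: the rate conditions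
  make the telescoping coefficients grow more slowly than the total weight and make the
  remaining perturbations vanish. Jensen's inequality transfers this to the averaged
  iterates. Since x_h* is the only point of the compact set X at which both gaps are
  nonpositive (strong convexity of h), the averaged iterates converge to it.\<close>

lemma weighted_telescoping_sum_le:
  fixes c D :: "nat \<Rightarrow> real"
  assumes c_nonneg: "\<And>k. 0 \<le> c k" and c_mono: "\<And>k. c k \<le> c (Suc k)"
    and D_bounds: "\<And>k. 0 \<le> D k" "\<And>k. D k \<le> Delta"
  shows "(\<Sum>k<N. c k * (D k - D (Suc k))) \<le> c N * Delta"
proof -
  have "(\<Sum>k<N. c k * (D k - D (Suc k))) + c N * D N \<le> c N * Delta"
  proof (induction N)
    case 0
    then show ?case using c_nonneg[of 0] D_bounds[of 0] by (simp add: mult_left_mono)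
  next
    case (Suc N)
    have "(\<Sum>k<Suc N. c k * (D k - D (Suc k))) + c (Suc N) * D (Suc N)
        = ((\<Sum>k<N. c k * (D k - D (Suc k))) + c N * D N) + (c (Suc N) - c N) * D (Suc N)"
      by (simp add: algebra_simps)
    also have "\<dots> \<le> c N * Delta + (c (Suc N) - c N) * Delta"
      using Suc.IH c_mono[of N] D_bounds[of "Suc N"] by (intro add_mono mult_left_mono) auto
    finally show ?case by (simp add: algebra_simps)
  qed
  moreover have "0 \<le> c N * D N" using c_nonneg D_bounds by simp
  ultimately show ?thesis by linarith
qed

lemma weighted_average_tendsto_zero:
  fixes w u :: "nat \<Rightarrow> real"
  assumes w_pos: "\<And>k. 0 < w k" and W: "filterlim (\<lambda>N. \<Sum>k<N. w k) at_top sequentially"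
    and u: "u \<longlonglongrightarrow> 0"
  shows "(\<lambda>N. (\<Sum>k<N. w k * u k) / (\<Sum>k<N. w k)) \<longlonglongrightarrow> 0"
proof (rule LIMSEQ_I)
  fix e :: real assume e: "0 < e"
  obtain K where K: "\<And>k. k \<ge> K \<Longrightarrow> norm (u k) < e/2"
    using LIMSEQ_D[OF u, of "e/2"] e by auto
  define A where "A = (\<Sum>k<K. w k * \<bar>u k\<bar>)"
  obtain N0 where N0: "\<And>N. N \<ge> N0 \<Longrightarrow> (\<Sum>k<N. w k) > 2*A/e"
    using W unfolding filterlim_at_top_dense eventually_sequentially by blast
  show "\<exists>N0. \<forall>N\<ge>N0. norm ((\<Sum>k<N. w k * u k) / (\<Sum>k<N. w k) - 0) < e"
  proof (intro exI allI impI)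
    fix N assume N: "N \<ge> max N0 K"
    define W where "W = (\<Sum>k<N. w k)"
    have A_nonneg: "0 \<le> A" unfolding A_def using w_pos by (intro sum_nonneg) (simp add: less_imp_le)
    have A_small: "A < W * (e/2)" using N0[of N] N e by (simp add: W_def field_simps)
    then have "0 < W * (e/2)" using A_nonneg by linarith
    then have W_pos: "W > 0" using e by (simp add: zero_less_mult_iff)
    have split: "{..<N} = {..<K} \<union> {K..<N}" using N by auto
    have "\<bar>\<Sum>k<N. w k * u k\<bar> \<le> (\<Sum>k<N. w k * \<bar>u k\<bar>)"
      by (rule order_trans[OF sum_abs]) (simp add: abs_mult w_pos less_imp_le)
    also have "\<dots> = A + (\<Sum>k\<in>{K..<N}. w k * \<bar>u k\<bar>)"
      unfolding A_def split by (subst sum.union_disjoint) auto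
    also have "(\<Sum>k\<in>{K..<N}. w k * \<bar>u k\<bar>) \<le> (\<Sum>k<N. w k * (e/2))"
      using K w_pos e
      by (intro order_trans[OF sum_mono sum_mono2[of "{..<N}"]] mult_left_mono) (auto simp: less_imp_le)
    also have "\<dots> = W * (e/2)" by (simp add: W_def sum_distrib_right)
    finally have "\<bar>\<Sum>k<N. w k * u k\<bar> < W * e" using A_small by linarith
    then show "norm ((\<Sum>k<N. w k * u k) / (\<Sum>k<N. w k) - 0) < e"
      using W_pos by (simp add: W_def[symmetric] abs_divide divide_less_eq mult.commute)
  qed
qed

lemma weighted_average_eventually_less:
  fixes w c D u e :: "nat \<Rightarrow> real"
  assumes w_pos: "\<And>k. 0 < w k" and W: "filterlim (\<lambda>N. \<Sum>k<N. w k) at_top sequentially"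
    and c_nonneg: "\<And>k. 0 \<le> c k" and c_mono: "\<And>k. c k \<le> c (Suc k)"
    and D_bounds: "\<And>k. 0 \<le> D k" "\<And>k. D k \<le> Delta"
    and descent: "\<And>k. w k * u k \<le> c k * (D k - D (Suc k)) + w k * e k"
    and e: "e \<longlonglongrightarrow> 0"
    and c_slow: "(\<lambda>N. c N / (\<Sum>k<N. w k)) \<longlonglongrightarrow> 0"
    and eps: "\<epsilon> > 0"
  shows "\<forall>\<^sub>F N in sequentially. (\<Sum>k<N. w k * u k) / (\<Sum>k<N. w k) < \<epsilon>"
proof -
  have "(\<lambda>N. c N / (\<Sum>k<N. w k) * Delta + (\<Sum>k<N. w k * e k) / (\<Sum>k<N. w k)) \<longlonglongrightarrow> 0"
    using tendsto_add_zero[OF tendsto_mult_left_zero[OF c_slow]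
        weighted_average_tendsto_zero[OF w_pos W e]] .
  then have "\<forall>\<^sub>F N in sequentially. c N / (\<Sum>k<N. w k) * Delta + (\<Sum>k<N. w k * e k) / (\<Sum>k<N. w k) < \<epsilon>"
    using eps by (rule order_tendstoD)
  then show ?thesis
    using eventually_ge_at_top[of 1]
  proof eventually_elim
    case (elim N)
    have W_pos: "(\<Sum>k<N. w k) > 0"
      using elim(2) w_pos by (intro sum_pos) (auto simp: lessThan_empty_iff)
    have "(\<Sum>k<N. w k * u k) \<le> (\<Sum>k<N. c k * (D k - D (Suc k))) + (\<Sum>k<N. w k * e k)"
      using descent by (simp add: sum.distrib[symmetric] sum_mono)
    also have "\<dots> \<le> c N * Delta + (\<Sum>k<N. w k * e k)"
      using weighted_telescoping_sum_le[where c=c and D=D, OF c_nonneg c_mono D_bounds] by simp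
    finally have "(\<Sum>k<N. w k * u k) / (\<Sum>k<N. w k)
        \<le> c N / (\<Sum>k<N. w k) * Delta + (\<Sum>k<N. w k * e k) / (\<Sum>k<N. w k)"
      using W_pos by (simp add: divide_right_mono add_divide_distrib[symmetric])
    then show ?case using elim(1) by linarith
  qed
qed

lemma tendsto_Suc_powr_neg:
  assumes "s < 0"
  shows "(\<lambda>k. (real k + 1) powr s) \<longlonglongrightarrow> 0"
  by (rule tendsto_neg_powr[OF assms filterlim_at_top_mono[OF filterlim_real_sequentially]]) auto

lemma sum_Suc_powr_at_top:
  assumes "p \<ge> -1"
  shows "filterlim (\<lambda>N. \<Sum>k<N. (real k + 1) powr p) at_top sequentially"
proof (rule filterlim_at_top_mono[OF harm_at_top always_eventually, rule_format])
  fix N :: nat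
  have "harm N = (\<Sum>k<N. inverse (real k + 1) :: real)"
    unfolding harm_def using sum.atLeast1_atMost_eq[of "\<lambda>k. inverse (of_nat k) :: real" N]
    by (simp add: add.commute)
  also have "\<dots> \<le> (\<Sum>k<N. (real k + 1) powr p)"
  proof (intro sum_mono)
    fix k
    have "(real k + 1) powr (-1) \<le> (real k + 1) powr p"
      using assms by (intro powr_mono) auto
    then show "inverse (real k + 1) \<le> (real k + 1) powr p"
      by (simp add: powr_minus)
  qed
  finally show "harm N \<le> (\<Sum>k<N. (real k + 1) powr p)" .
qed

lemma sum_Suc_powr_lower_bound:
  assumes N: "N \<ge> 1"
  shows "2 powr (-\<bar>p\<bar>) / 4 * (real N + 1) powr (p + 1) \<le> (\<Sum>k<N. (real k + 1) powr p)"
proof -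
  let ?B = "2 powr (-\<bar>p\<bar>) * (real N + 1) powr p"
  have term_bound: "?B \<le> t powr p" if t: "(real N + 1) / 2 \<le> t" "t \<le> real N + 1" for t
  proof (cases "p \<ge> 0")
    case True
    have "((real N + 1) / 2) powr p \<le> t powr p" using t True by (intro powr_mono2) auto
    then show ?thesis using True by (simp add: powr_divide powr_minus_divide)
  next
    case False
    have "2 powr (-\<bar>p\<bar>) \<le> (2::real) powr 0" by (intro powr_mono) auto
    then have "?B \<le> (real N + 1) powr p" by (simp add: mult_left_le_one_le)
    also have "\<dots> \<le> t powr p" using t False by (intro powr_mono2') auto
    finally show ?thesis .
  qed
  have half: "2 * (N div 2) \<le> N" "N \<le> 2 * (N div 2) + 1"
    using div_mult_mod_eq[of N 2] mod_less_eq_dividend[of N 2] by (auto simp: mod2_eq_if)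
  then have "real N \<le> 2 * real (N div 2) + 1" by linarith
  then have "(\<Sum>k\<in>{N div 2..<N}. ?B) \<le> (\<Sum>k\<in>{N div 2..<N}. (real k + 1) powr p)"
    by (intro sum_mono term_bound) auto
  also have "\<dots> \<le> (\<Sum>k<N. (real k + 1) powr p)"
    by (intro sum_mono2) auto
  finally have upper_half: "real (N - N div 2) * ?B \<le> (\<Sum>k<N. (real k + 1) powr p)" by simp
  have "N + 1 \<le> 4 * (N - N div 2)" using half N by linarith
  then have "real (N + 1) \<le> real (4 * (N - N div 2))" by (simp only: of_nat_le_iff)
  then have "(real N + 1) / 4 \<le> real (N - N div 2)" by simp
  then have "(real N + 1) / 4 * ?B \<le> real (N - N div 2) * ?B" by (intro mult_right_mono) auto
  moreover have "2 powr (-\<bar>p\<bar>) / 4 * (real N + 1) powr (p + 1) = (real N + 1) / 4 * ?B"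
    by (simp add: powr_add)
  ultimately show ?thesis using upper_half by linarith
qed

lemma Suc_powr_div_sum_Suc_powr_tendsto_zero:
  assumes "q < p + 1"
  shows "(\<lambda>N. (real N + 1) powr q / (\<Sum>k<N. (real k + 1) powr p)) \<longlonglongrightarrow> 0"
proof (rule tendsto_sandwich)
  define K where "K = 4 * 2 powr \<bar>p\<bar>"
  show "\<forall>\<^sub>F N in sequentially. (real N + 1) powr q / (\<Sum>k<N. (real k + 1) powr p)
      \<le> K * (real N + 1) powr (q - p - 1)"
    using eventually_ge_at_top[of 1]
  proof eventually_elim
    case (elim N)
    have lower: "(real N + 1) powr (p + 1) / K \<le> (\<Sum>k<N. (real k + 1) powr p)"
      using sum_Suc_powr_lower_bound[OF elim, of p] by (simp add: K_def powr_minus field_simps)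
    have "0 < (real N + 1) powr (p + 1) / K" by (simp add: K_def)
    then have "(real N + 1) powr q / (\<Sum>k<N. (real k + 1) powr p)
        \<le> (real N + 1) powr q / ((real N + 1) powr (p + 1) / K)"
      using lower by (intro divide_left_mono mult_pos_pos) auto
    also have "\<dots> = K * ((real N + 1) powr q / (real N + 1) powr (p + 1))"
      by (simp add: K_def)
    also have "\<dots> = K * (real N + 1) powr (q - p - 1)"
      by (simp only: diff_diff_eq powr_diff)
    finally show ?case .
  qed
  show "\<forall>\<^sub>F N in sequentially. 0 \<le> (real N + 1) powr q / (\<Sum>k<N. (real k + 1) powr p)"
    by (intro always_eventually allI divide_nonneg_nonneg sum_nonneg) auto
  show "(\<lambda>N. K * (real N + 1) powr (q - p - 1)) \<longlonglongrightarrow> 0"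
    using tendsto_Suc_powr_neg[of "q - p - 1"] assms by (intro tendsto_mult_right_zero) auto
qed simp

lemma power_rate_weighted_average_eventually_less:
  fixes gam u D e :: "nat \<Rightarrow> real"
  assumes gam: "\<And>k. gam k = g0 / (real k + 1) powr a" and pos: "a > 0" "g0 > 0" "a * r \<le> 1"
    and K: "K \<ge> 0" and q: "0 \<le> q" "q < 1 - a * r"
    and D_bounds: "\<And>k. 0 \<le> D k" "\<And>k. D k \<le> Delta"
    and descent: "\<And>k. gam k powr r * u k
      \<le> K * (real k + 1) powr q * (D k - D (Suc k)) + gam k powr r * e k"
    and e: "e \<longlonglongrightarrow> 0" and eps: "\<epsilon> > 0"
  shows "\<forall>\<^sub>F N in sequentially. (\<Sum>k<N. gam k powr r * u k) / (\<Sum>k<N. gam k powr r) < \<epsilon>"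
proof (rule weighted_average_eventually_less[OF _ _ _ _ D_bounds descent e _ eps])
  have gam_powr: "gam k powr r = g0 powr r * (real k + 1) powr (- (a * r))" for k
  proof -
    have "gam k = g0 * (real k + 1) powr (- a)" by (simp add: gam powr_minus divide_inverse)
    then show ?thesis using pos by (simp add: powr_mult powr_powr)
  qed
  then have sum_eq: "(\<Sum>k<N. gam k powr r) = g0 powr r * (\<Sum>k<N. (real k + 1) powr (- (a * r)))" for N
    by (simp add: sum_distrib_left)
  show "0 < gam k powr r" for k using pos by (simp add: gam_powr)
  show "filterlim (\<lambda>N. \<Sum>k<N. gam k powr r) at_top sequentially"
    unfolding sum_eq using pos
    by (intro filterlim_tendsto_pos_mult_at_top[OF tendsto_const _ sum_Suc_powr_at_top]) auto
  show "0 \<le> K * (real k + 1) powr q" for k using K by simp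
  show "K * (real k + 1) powr q \<le> K * (real (Suc k) + 1) powr q" for k
    using K q by (intro mult_left_mono powr_mono2) auto
  have "(\<lambda>N. K / g0 powr r * ((real N + 1) powr q / (\<Sum>k<N. (real k + 1) powr (- (a * r))))) \<longlonglongrightarrow> 0"
    using q by (intro tendsto_mult_right_zero Suc_powr_div_sum_Suc_powr_tendsto_zero) auto
  then show "(\<lambda>N. K * (real N + 1) powr q / (\<Sum>k<N. gam k powr r)) \<longlonglongrightarrow> 0"
    by (simp add: sum_eq)
qed

text \<open>Multiplying the descent inequality by gam k powr (r - 1) / 2, resp. by this coefficient
  divided by lam k, isolates the gap P, resp. Q, with weight gam k powr r. The two
  coefficients grow like powers of k below 1 - a r (this is where a + b < 1 enters), while
  the perturbations gam, lam and gam / lam vanish (the last one because b < a).\<close>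

lemma averaged_gaps_eventually_less:
  fixes gam lam P Q D :: "nat \<Rightarrow> real"
  assumes gam: "\<And>k. gam k = g0 / (real k + 1) powr a"
    and lam: "\<And>k. lam k = l0 / (real k + 1) powr b"
    and pos: "a > 0" "b > 0" "g0 > 0" "l0 > 0"
    and rates: "r < 1" "b < a" "a + b < 1" "a * r \<le> 1"
    and D_bounds: "\<And>k. 0 \<le> D k" "\<And>k. D k \<le> Delta"
    and descent: "\<And>k. 2 * gam k * (P k + lam k * Q k) \<le> D k - D (Suc k) + C * (gam k)\<^sup>2"
    and P_nonneg: "\<And>k. 0 \<le> P k" and Q_bound: "\<And>k. \<bar>Q k\<bar> \<le> H"
    and eps: "\<epsilon> > 0"
  shows "\<forall>\<^sub>F N in sequentially.
      (\<Sum>k<N. gam k powr r * P k) / (\<Sum>k<N. gam k powr r) < \<epsilon> \<and>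
      (\<Sum>k<N. gam k powr r * Q k) / (\<Sum>k<N. gam k powr r) < \<epsilon>"
proof -
  define t where "t k = real k + 1" for k
  have t_pos: "t k > 0" for k by (simp add: t_def)
  have gam_eq: "gam k = g0 * t k powr (- a)" and lam_eq: "lam k = l0 * t k powr (- b)" for k
    by (simp_all add: gam lam t_def powr_minus divide_inverse)
  have gam_pos: "gam k > 0" and lam_pos: "lam k > 0" for k
    using pos t_pos[of k] by (simp_all add: gam_eq lam_eq)
  have powr_to_zero: "(\<lambda>k. K * t k powr s) \<longlonglongrightarrow> 0" if "s < 0" for K s
    unfolding t_def by (intro tendsto_mult_right_zero tendsto_Suc_powr_neg that)
  have exponent: "0 \<le> a * (1 - r)" "a * (1 - r) < 1 - a * r" "a * (1 - r) + b < 1 - a * r"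
    using pos(1,2) rates by (simp_all add: algebra_simps)
  define c where "c k = gam k powr (r - 1) / 2" for k
  have weight: "gam k powr r = c k * (2 * gam k)" for k
    using gam_pos[of k] by (simp add: c_def powr_diff)
  have c_eq: "c k = g0 powr (r - 1) / 2 * t k powr (a * (1 - r))" for k
    using pos t_pos[of k] by (simp add: c_def gam_eq powr_mult powr_powr algebra_simps)
  have c_lam_eq: "c k / lam k = g0 powr (r - 1) / (2 * l0) * t k powr (a * (1 - r) + b)" for k
  proof -
    have "t k powr b * t k powr (a * (1 - r)) = t k powr (a * (1 - r) + b)"
      by (simp add: powr_add[symmetric] algebra_simps)
    then show ?thesis
      using t_pos[of k] pos by (simp add: c_eq lam_eq powr_minus field_simps)
  qed
  have "\<forall>\<^sub>F N in sequentially. (\<Sum>k<N. gam k powr r * P k) / (\<Sum>k<N. gam k powr r) < \<epsilon>"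
  proof (rule power_rate_weighted_average_eventually_less[OF gam pos(1,3) rates(4) _ _ _ D_bounds _ _ eps])
    show "gam k powr r * P k \<le> g0 powr (r - 1) / 2 * (real k + 1) powr (a * (1 - r)) * (D k - D (Suc k))
        + gam k powr r * (C / 2 * gam k + H * lam k)" for k
    proof -
      have "c k * (2 * gam k * (P k + lam k * Q k)) \<le> c k * (D k - D (Suc k) + C * (gam k)\<^sup>2)"
        using descent by (rule mult_left_mono) (simp add: c_def)
      moreover have "gam k powr r * lam k * (- Q k) \<le> gam k powr r * lam k * H"
        using Q_bound[of k] gam_pos[of k] lam_pos[of k] by (intro mult_left_mono) auto
      ultimately show ?thesis
        unfolding weight c_eq[unfolded t_def, symmetric] by (simp add: power2_eq_square algebra_simps)
    qed
    show "(\<lambda>k. C / 2 * gam k + H * lam k) \<longlonglongrightarrow> 0"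
      unfolding gam_eq lam_eq using pos
      by (intro tendsto_add_zero tendsto_mult_right_zero powr_to_zero) auto
  qed (use pos exponent in auto)
  moreover have "\<forall>\<^sub>F N in sequentially. (\<Sum>k<N. gam k powr r * Q k) / (\<Sum>k<N. gam k powr r) < \<epsilon>"
  proof (rule power_rate_weighted_average_eventually_less[OF gam pos(1,3) rates(4) _ _ _ D_bounds _ _ eps])
    show "gam k powr r * Q k \<le> g0 powr (r - 1) / (2 * l0) * (real k + 1) powr (a * (1 - r) + b)
        * (D k - D (Suc k)) + gam k powr r * (C / 2 * (gam k / lam k))" for k
    proof -
      have "c k / lam k * (2 * gam k * (P k + lam k * Q k))
          \<le> c k / lam k * (D k - D (Suc k) + C * (gam k)\<^sup>2)"
        using descent by (rule mult_left_mono) (use lam_pos[of k] in \<open>simp add: c_def\<close>)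
      moreover have "c k / lam k * (2 * gam k * (P k + lam k * Q k))
          = gam k powr r / lam k * P k + gam k powr r * Q k"
        using lam_pos[of k] by (simp add: weight field_simps)
      moreover have "c k / lam k * (D k - D (Suc k) + C * (gam k)\<^sup>2)
          = c k / lam k * (D k - D (Suc k)) + gam k powr r * (C / 2 * (gam k / lam k))"
        using lam_pos[of k] by (simp add: weight power2_eq_square field_simps)
      moreover have "0 \<le> gam k powr r / lam k * P k"
        using lam_pos[of k] P_nonneg[of k] by simp
      ultimately show ?thesis
        unfolding c_lam_eq[unfolded t_def, symmetric] by linarith
    qed
    have "gam k / lam k = g0 / l0 * t k powr (b - a)" for k
      using pos by (simp add: gam_eq lam_eq powr_diff powr_minus field_simps)
    then show "(\<lambda>k. C / 2 * (gam k / lam k)) \<longlonglongrightarrow> 0"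
      using rates by (simp only:) (intro tendsto_mult_right_zero powr_to_zero, simp)
  qed (use pos exponent in auto)
  ultimately show ?thesis
    by eventually_elim simp
qed

lemma strongly_convex_imp_convex_on:
  assumes "mu \<ge> 0" "strongly_convex mu h"
  shows "convex_on UNIV h"
  unfolding convex_on_def
proof (intro conjI ballI allI impI)
  fix x y :: 'a and u v :: real
  assume uv: "0 \<le> u" "0 \<le> v" "u + v = 1"
  have "h ((1 - v) *\<^sub>R x + v *\<^sub>R y)
      \<le> (1 - v) * h x + v * h y - mu / 2 * v * (1 - v) * (norm (x - y))\<^sup>2"
    using assms(2) uv unfolding strongly_convex_def by auto
  moreover have "mu / 2 * v * (1 - v) * (norm (x - y))\<^sup>2 \<ge> 0" using assms(1) uv by simp
  moreover have "1 - v = u" using uv by simp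
  ultimately show "h (u *\<^sub>R x + v *\<^sub>R y) \<le> u * h x + v * h y" by simp
qed simp

lemma is_subgradient_norm_le:
  fixes f :: "'a::real_inner \<Rightarrow> real"
  assumes sg: "is_subgradient f x g" and x: "norm x \<le> R"
    and bound: "\<And>y. norm y \<le> R + 1 \<Longrightarrow> \<bar>f y\<bar> \<le> M"
  shows "norm g \<le> 2 * M"
proof (cases "g = 0")
  case True
  then show ?thesis using bound[of x] x by simp
next
  case False
  define y where "y = x + (1 / norm g) *\<^sub>R g"
  have "norm y \<le> R + 1"
    using x False norm_triangle_ineq[of x "(1 / norm g) *\<^sub>R g"] by (simp add: y_def)
  moreover have "inner g (y - x) = norm g"
    using False by (simp add: y_def power2_norm_eq_inner[symmetric] power2_eq_square)
  then have "f x + norm g \<le> f y"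
    using sg by (metis is_subgradient_def)
  ultimately show ?thesis using bound[of y] bound[of x] x by linarith
qed

text \<open>Extend the segment from u to v by length one beyond v.\<close>

lemma convex_on_bounded_imp_diff_le:
  fixes f :: "'a::real_normed_vector \<Rightarrow> real"
  assumes convex: "convex_on UNIV f" and u: "norm u \<le> R" and v: "norm v \<le> R"
    and bound: "\<And>y. norm y \<le> R + 1 \<Longrightarrow> \<bar>f y\<bar> \<le> M"
  shows "f v - f u \<le> 2 * M * norm (v - u)"
proof (cases "u = v")
  case True
  then show ?thesis by simp
next
  case False
  define d where "d = norm (v - u)"
  have d: "d > 0" using False by (simp add: d_def)
  define w where "w = v + (1 / d) *\<^sub>R (v - u)"
  have w: "norm w \<le> R + 1"
    using v d norm_triangle_ineq[of v "(1 / d) *\<^sub>R (v - u)"] by (simp add: w_def d_def)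
  define t where "t = d / (1 + d)"
  have t: "0 \<le> t" "t \<le> 1" "t \<le> d" using d by (auto simp: t_def field_simps)
  have "(1 - t) *\<^sub>R u + t *\<^sub>R w = u + (t + t / d) *\<^sub>R (v - u)"
    by (simp add: w_def algebra_simps)
  also have "t + t / d = 1"
    using d by (simp add: t_def divide_simps)
  finally have "(1 - t) *\<^sub>R u + t *\<^sub>R w = v" by simp
  then have "f v \<le> (1 - t) * f u + t * f w"
    using convex_onD[OF convex t(1,2), of u w] by simp
  then have "f v - f u \<le> t * (f w - f u)" by (simp add: algebra_simps)
  also have "\<dots> \<le> t * (2 * M)"
    using bound[OF w] bound[of u] u t by (intro mult_left_mono) auto
  also have "\<dots> \<le> d * (2 * M)"
    using bound[of u] u t by (intro mult_right_mono) auto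
  finally show ?thesis by (simp add: d_def mult.commute)
qed

lemma projected_subgradient_step:
  fixes X :: "'a::euclidean_space set"
  assumes X: "convex X" "closed X" "X \<noteq> {}" and y: "y \<in> X"
    and sg: "is_subgradient f z g" and step_nonneg: "\<gamma> \<ge> 0"
  shows "(norm (closest_point X (z - \<gamma> *\<^sub>R g) - y))\<^sup>2
      \<le> (norm (z - y))\<^sup>2 - 2 * \<gamma> * (f z - f y) + \<gamma>\<^sup>2 * (norm g)\<^sup>2"
proof -
  have "norm (closest_point X (z - \<gamma> *\<^sub>R g) - y) \<le> norm ((z - y) - \<gamma> *\<^sub>R g)"
    using closest_point_lipschitz[OF X, of "z - \<gamma> *\<^sub>R g" y] y
    by (simp add: closest_point_self dist_norm algebra_simps)
  then have "(norm (closest_point X (z - \<gamma> *\<^sub>R g) - y))\<^sup>2 \<le> (norm ((z - y) - \<gamma> *\<^sub>R g))\<^sup>2"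
    by (intro power_mono) auto
  also have "\<dots> = (norm (z - y))\<^sup>2 - 2 * inner (z - y) (\<gamma> *\<^sub>R g) + (norm (\<gamma> *\<^sub>R g))\<^sup>2"
    using dot_norm_neg[of "z - y" "\<gamma> *\<^sub>R g"] by simp
  also have "\<dots> = (norm (z - y))\<^sup>2 - 2 * \<gamma> * inner g (z - y) + \<gamma>\<^sup>2 * (norm g)\<^sup>2"
    by (simp add: inner_commute power_mult_distrib)
  finally have "(norm (closest_point X (z - \<gamma> *\<^sub>R g) - y))\<^sup>2
      \<le> (norm (z - y))\<^sup>2 - 2 * \<gamma> * inner g (z - y) + \<gamma>\<^sup>2 * (norm g)\<^sup>2" .
  moreover have "f z + inner g (y - z) \<le> f y"
    using sg by (simp add: is_subgradient_def)
  then have "f z - f y \<le> inner g (z - y)"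
    by (simp add: inner_diff_right)
  then have "\<gamma> * (f z - f y) \<le> \<gamma> * inner g (z - y)"
    using step_nonneg by (rule mult_left_mono)
  ultimately show ?thesis by linarith
qed

lemma projected_steps_drift:
  fixes X :: "'a::euclidean_space set" and z g :: "nat \<Rightarrow> 'a"
  assumes X: "convex X" "closed X" "X \<noteq> {}" and z_in: "\<And>i. i \<le> m \<Longrightarrow> z i \<in> X"
    and step: "\<And>i. i < m \<Longrightarrow> z (Suc i) = closest_point X (z i - \<gamma> *\<^sub>R g i)"
    and g_bound: "\<And>i. i < m \<Longrightarrow> norm (g i) \<le> G" and step_nonneg: "\<gamma> \<ge> 0"
  shows "i \<le> m \<Longrightarrow> norm (z i - z 0) \<le> real i * \<gamma> * G"
proof (induction i)
  case (Suc i)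
  have "norm (z (Suc i) - z i) = dist (closest_point X (z i - \<gamma> *\<^sub>R g i)) (closest_point X (z i))"
    using Suc z_in[of i] by (simp add: step closest_point_self dist_norm)
  also have "\<dots> \<le> dist (z i - \<gamma> *\<^sub>R g i) (z i)"
    by (rule closest_point_lipschitz[OF X])
  also have "\<dots> = \<gamma> * norm (g i)"
    using step_nonneg by (simp add: dist_norm)
  also have "\<dots> \<le> \<gamma> * G"
    using g_bound[of i] Suc step_nonneg by (intro mult_left_mono) auto
  finally show ?case
    using Suc norm_triangle_ineq[of "z (Suc i) - z i" "z i - z 0"] by (simp add: algebra_simps)
qed simp

text \<open>Step i is a projected subgradient step for f i at z i; the Lipschitz bound moves
  its gap from z i back to the start z 0 of the cycle, at the cost of the drift i \<gamma> G.\<close>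

lemma incremental_cycle_descent:
  fixes X :: "'a::euclidean_space set" and f :: "nat \<Rightarrow> 'a \<Rightarrow> real" and z g :: "nat \<Rightarrow> 'a"
  assumes X: "convex X" "closed X" "X \<noteq> {}" and z0: "z 0 \<in> X" and y: "y \<in> X"
    and step: "\<And>i. i < m \<Longrightarrow> z (Suc i) = closest_point X (z i - \<gamma> *\<^sub>R g i)"
    and subgrad: "\<And>i. i < m \<Longrightarrow> is_subgradient (f i) (z i) (g i)"
    and g_bound: "\<And>i. i < m \<Longrightarrow> norm (g i) \<le> G"
    and lipschitz: "\<And>i u v. i < m \<Longrightarrow> u \<in> X \<Longrightarrow> v \<in> X \<Longrightarrow> f i u - f i v \<le> G * norm (u - v)"
    and step_nonneg: "\<gamma> \<ge> 0"
  shows "(norm (z m - y))\<^sup>2 \<le> (norm (z 0 - y))\<^sup>2 - 2 * \<gamma> * (\<Sum>i<m. f i (z 0) - f i y)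
      + real m * (2 * real m + 1) * \<gamma>\<^sup>2 * G\<^sup>2"
proof -
  have z_in: "z i \<in> X" if "i \<le> m" for i
    using that by (induction i) (auto simp: z0 step closest_point_in_set[OF X(2,3)])
  have drift: "norm (z i - z 0) \<le> real i * \<gamma> * G" if "i \<le> m" for i
    using projected_steps_drift[where z = z and g = g, OF X z_in step g_bound step_nonneg that] by simp
  have "(norm (z i - y))\<^sup>2 \<le> (norm (z 0 - y))\<^sup>2 - 2 * \<gamma> * (\<Sum>j<i. f j (z 0) - f j y)
      + real i * (2 * real m + 1) * \<gamma>\<^sup>2 * G\<^sup>2" if "i \<le> m" for i
    using that
  proof (induction i)
    case (Suc i)
    then have i: "i < m" by simp
    have G: "0 \<le> G" using g_bound[OF i] norm_ge_zero order_trans by blast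
    have projected: "(norm (z (Suc i) - y))\<^sup>2
        \<le> (norm (z i - y))\<^sup>2 - 2 * \<gamma> * (f i (z i) - f i y) + \<gamma>\<^sup>2 * G\<^sup>2"
    proof -
      have "\<gamma>\<^sup>2 * (norm (g i))\<^sup>2 \<le> \<gamma>\<^sup>2 * G\<^sup>2"
        using g_bound[OF i] by (intro mult_left_mono power_mono) auto
      then show ?thesis
        using projected_subgradient_step[OF X y subgrad[OF i] step_nonneg] step[OF i] by simp
    qed
    have "f i (z 0) - f i (z i) \<le> G * norm (z 0 - z i)"
      using lipschitz[OF i z0 z_in] i by simp
    also have "\<dots> \<le> G * (real i * \<gamma> * G)"
      using drift[of i] i G by (intro mult_left_mono) (auto simp: norm_minus_commute)
    also have "\<dots> \<le> G * (real m * \<gamma> * G)"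
      using i G step_nonneg by (intro mult_left_mono mult_right_mono) auto
    finally have "2 * \<gamma> * (f i (z 0) - f i (z i)) \<le> 2 * \<gamma> * (G * (real m * \<gamma> * G))"
      using step_nonneg by (intro mult_left_mono) auto
    moreover have "real (Suc i) * (2 * real m + 1) * \<gamma>\<^sup>2 * G\<^sup>2
        = real i * (2 * real m + 1) * \<gamma>\<^sup>2 * G\<^sup>2 + \<gamma>\<^sup>2 * G\<^sup>2 + 2 * \<gamma> * (G * (real m * \<gamma> * G))"
      by (simp add: power2_eq_square algebra_simps)
    moreover have "2 * \<gamma> * (\<Sum>j<Suc i. f j (z 0) - f j y)
        = 2 * \<gamma> * (\<Sum>j<i. f j (z 0) - f j y) + 2 * \<gamma> * (f i (z 0) - f i y)"
      by (simp add: algebra_simps)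
    moreover have "2 * \<gamma> * (f i (z i) - f i y)
        = 2 * \<gamma> * (f i (z 0) - f i y) - 2 * \<gamma> * (f i (z 0) - f i (z i))"
      by (simp add: algebra_simps)
    ultimately show ?case
      using Suc.IH[OF Suc_leD[OF Suc.prems]] projected by linarith
  qed simp
  from this[of m] show ?thesis by simp
qed

lemma weighted_average_eq_sum:
  fixes y :: "'i \<Rightarrow> 'a::real_vector"
  shows "(\<Sum>i\<in>I. w i *\<^sub>R y i) /\<^sub>R (\<Sum>i\<in>I. w i) = (\<Sum>i\<in>I. (w i / (\<Sum>i\<in>I. w i)) *\<^sub>R y i)"
  unfolding scaleR_sum_right by (simp add: divide_inverse_commute)

lemma convex_weighted_average_in:
  fixes y :: "'i \<Rightarrow> 'a::real_vector"
  assumes "convex S" "finite I" "I \<noteq> {}" "\<And>i. i \<in> I \<Longrightarrow> 0 < w i" "\<And>i. i \<in> I \<Longrightarrow> y i \<in> S"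
  shows "(\<Sum>i\<in>I. w i *\<^sub>R y i) /\<^sub>R (\<Sum>i\<in>I. w i) \<in> S"
proof -
  have "0 < (\<Sum>i\<in>I. w i)" using assms by (intro sum_pos) auto
  then show ?thesis
    unfolding weighted_average_eq_sum using assms
    by (intro convex_sum) (auto simp: sum_divide_distrib[symmetric] less_imp_le)
qed

lemma convex_on_weighted_average_diff_le:
  fixes y :: "'i \<Rightarrow> 'a::real_vector"
  assumes "convex_on S f" "finite I" "I \<noteq> {}" "\<And>i. i \<in> I \<Longrightarrow> 0 < w i" "\<And>i. i \<in> I \<Longrightarrow> y i \<in> S"
  shows "f ((\<Sum>i\<in>I. w i *\<^sub>R y i) /\<^sub>R (\<Sum>i\<in>I. w i)) - c
      \<le> (\<Sum>i\<in>I. w i * (f (y i) - c)) / (\<Sum>i\<in>I. w i)"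
proof -
  have W: "0 < (\<Sum>i\<in>I. w i)" using assms by (intro sum_pos) auto
  then have "f (\<Sum>i\<in>I. (w i / (\<Sum>i\<in>I. w i)) *\<^sub>R y i) \<le> (\<Sum>i\<in>I. w i / (\<Sum>i\<in>I. w i) * f (y i))"
    using assms by (intro convex_on_sum) (auto simp: sum_divide_distrib[symmetric] less_imp_le)
  also have "\<dots> = (\<Sum>i\<in>I. w i * (f (y i) - c)) / (\<Sum>i\<in>I. w i) + c"
    using W by (simp add: sum_divide_distrib[symmetric] right_diff_distrib sum_subtractf
        sum_distrib_right[symmetric] diff_divide_distrib)
  finally show ?thesis
    unfolding weighted_average_eq_sum by simp
qed

lemma convex_on_sum_fun:
  assumes "finite I" "\<And>i. i \<in> I \<Longrightarrow> convex_on S (f i)" "convex S"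
  shows "convex_on S (\<lambda>x. \<Sum>i\<in>I. f i x)"
  using assms by (induction I rule: finite_induct) (auto simp: convex_on_const)

lemma strongly_convex_argmin_unique:
  fixes X :: "'a::real_normed_vector set"
  assumes X: "convex X" and F: "convex_on X F" and h: "mu > 0" "strongly_convex mu h"
    and xh: "xh \<in> argmin_set F X" "\<forall>z\<in>argmin_set F X. h xh \<le> h z"
    and y: "y \<in> X" "F y \<le> F xh" "h y \<le> h xh"
  shows "y = xh"
proof (rule ccontr)
  assume "y \<noteq> xh"
  define mid where "mid = (1/2) *\<^sub>R y + (1/2) *\<^sub>R xh"
  have xh_X: "xh \<in> X" and xh_min: "\<And>z. z \<in> X \<Longrightarrow> F xh \<le> F z"
    using xh(1) by (auto simp: argmin_set_def)
  have "mid \<in> X"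
    using X y(1) xh_X unfolding mid_def by (intro convexD) auto
  moreover have "F mid \<le> F y / 2 + F xh / 2"
    using convex_onD[OF F, of "1/2" y xh] y(1) xh_X by (simp add: mid_def)
  ultimately have "mid \<in> argmin_set F X"
    using y(2) xh_min by (force simp: argmin_set_def)
  then have "h xh \<le> h mid" using xh(2) by blast
  moreover have "h mid \<le> h y / 2 + h xh / 2 - mu / 8 * (norm (y - xh))\<^sup>2"
    using h(2)[unfolded strongly_convex_def, rule_format, of "1/2" y xh] by (simp add: mid_def)
  moreover have "0 < mu / 8 * (norm (y - xh))\<^sup>2"
    using h(1) \<open>y \<noteq> xh\<close> by simp
  ultimately show False using y(3) by linarith
qed

text \<open>On the compact set of points of X at distance at least \<epsilon> from xh, the larger of
  the two gaps is continuous and, by uniqueness, positive; so it has a positive minimum,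
  which the gaps of y N eventually undercut.\<close>

lemma tendsto_of_vanishing_gaps:
  fixes F h :: "'a::metric_space \<Rightarrow> real"
  assumes X: "compact X" and cont: "continuous_on X F" "continuous_on X h" and xh: "xh \<in> X"
    and unique: "\<And>z. z \<in> X \<Longrightarrow> F z \<le> F xh \<Longrightarrow> h z \<le> h xh \<Longrightarrow> z = xh"
    and y_in: "\<forall>\<^sub>F N in sequentially. y N \<in> X"
    and gaps: "\<And>\<epsilon>. \<epsilon> > 0 \<Longrightarrow> \<forall>\<^sub>F N in sequentially. F (y N) - F xh < \<epsilon> \<and> h (y N) - h xh < \<epsilon>"
  shows "y \<longlonglongrightarrow> xh"
  unfolding tendsto_iff
proof (intro allI impI)
  fix e :: real assume e: "e > 0"
  define K where "K = X - ball xh e"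
  have far: "\<forall>\<^sub>F N in sequentially. y N \<notin> K"
  proof (cases "K = {}")
    case True
    then show ?thesis by simp
  next
    case False
    define gap where "gap z = max (F z - F xh) (h z - h xh)" for z
    have K: "compact K" unfolding K_def using X by (intro compact_diff) auto
    have gap: "continuous_on K gap"
      unfolding gap_def K_def
      by (intro continuous_on_max continuous_on_diff continuous_on_const
          continuous_on_subset[OF cont(1)] continuous_on_subset[OF cont(2)]) auto
    obtain z0 where z0: "z0 \<in> K" "\<And>z. z \<in> K \<Longrightarrow> gap z0 \<le> gap z"
      using continuous_attains_inf[OF K False gap] by blast
    have "gap z0 > 0"
    proof (rule ccontr)
      assume "\<not> gap z0 > 0"
      then have "z0 = xh" using unique z0(1) by (simp add: gap_def K_def)
      then show False using z0(1) e by (simp add: K_def)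
    qed
    from gaps[OF this] show ?thesis
    proof eventually_elim
      case (elim N)
      then have "gap (y N) < gap z0" by (simp add: gap_def)
      then show "y N \<notin> K" using z0(2) by (meson not_le)
    qed
  qed
  from y_in far show "\<forall>\<^sub>F N in sequentially. dist (y N) xh < e"
    by eventually_elim (auto simp: K_def dist_commute)
qed

lemma weighted_average_tendsto_of_vanishing_gaps:
  fixes X :: "'a::euclidean_space set" and y :: "nat \<Rightarrow> 'a"
  assumes X: "compact X" "convex X" and convex: "convex_on UNIV F" "convex_on UNIV h"
    and xh: "xh \<in> X" and unique: "\<And>z. z \<in> X \<Longrightarrow> F z \<le> F xh \<Longrightarrow> h z \<le> h xh \<Longrightarrow> z = xh"
    and y_in: "\<And>k. y k \<in> X" and w_pos: "\<And>k. 0 < w k"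
    and gaps: "\<And>\<epsilon>. \<epsilon> > 0 \<Longrightarrow> \<forall>\<^sub>F N in sequentially.
      (\<Sum>k<N. w k * (F (y k) - F xh)) / (\<Sum>k<N. w k) < \<epsilon> \<and>
      (\<Sum>k<N. w k * (h (y k) - h xh)) / (\<Sum>k<N. w k) < \<epsilon>"
  shows "(\<lambda>N. (\<Sum>k<N. w k *\<^sub>R y k) /\<^sub>R (\<Sum>k<N. w k)) \<longlonglongrightarrow> xh"
proof (rule tendsto_of_vanishing_gaps[OF X(1) _ _ xh unique])
  show "continuous_on X F" "continuous_on X h"
    using convex_on_continuous[OF open_UNIV] convex continuous_on_subset by blast+
  have nonempty: "{..<N} \<noteq> {}" if "N \<ge> 1" for N :: nat
    using that by (simp add: lessThan_empty_iff)
  show "\<forall>\<^sub>F N in sequentially. (\<Sum>k<N. w k *\<^sub>R y k) /\<^sub>R (\<Sum>k<N. w k) \<in> X"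
    using eventually_ge_at_top[of 1]
    by eventually_elim (use nonempty w_pos y_in in \<open>auto intro!: convex_weighted_average_in[OF X(2)]\<close>)
  fix \<epsilon> :: real assume "\<epsilon> > 0"
  from gaps[OF this] eventually_ge_at_top[of 1] show "\<forall>\<^sub>F N in sequentially.
      F ((\<Sum>k<N. w k *\<^sub>R y k) /\<^sub>R (\<Sum>k<N. w k)) - F xh < \<epsilon> \<and>
      h ((\<Sum>k<N. w k *\<^sub>R y k) /\<^sub>R (\<Sum>k<N. w k)) - h xh < \<epsilon>"
  proof eventually_elim
    case (elim N)
    then show ?case
      using convex_on_weighted_average_diff_le[where w = w and y = y and c = "F xh",
          OF convex(1) finite_lessThan nonempty[OF elim(2)] w_pos]
        convex_on_weighted_average_diff_le[where w = w and y = y and c = "h xh",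
          OF convex(2) finite_lessThan nonempty[OF elim(2)] w_pos]
      by fastforce
  qed
qed

lemma convex_on_family_bounded_on_cball:
  fixes f :: "'i \<Rightarrow> 'a::euclidean_space \<Rightarrow> real"
  assumes "finite I" "\<And>i. i \<in> I \<Longrightarrow> convex_on UNIV (f i)"
  shows "\<exists>M. \<forall>i\<in>I. \<forall>y. norm y \<le> \<rho> \<longrightarrow> \<bar>f i y\<bar> \<le> M"
  using assms
proof (induction I rule: finite_induct)
  case (insert j I)
  obtain M where M: "\<forall>i\<in>I. \<forall>y. norm y \<le> \<rho> \<longrightarrow> \<bar>f i y\<bar> \<le> M"
    using insert by blast
  have "continuous_on (cball 0 \<rho>) (f j)"
    using convex_on_continuous[OF open_UNIV, of "f j"] insert.prems
    by (auto intro: continuous_on_subset)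
  then have "bounded (f j ` cball 0 \<rho>)"
    by (intro compact_imp_bounded compact_continuous_image compact_cball)
  then obtain Mj where "\<forall>y\<in>cball 0 \<rho>. \<bar>f j y\<bar> \<le> Mj"
    unfolding bounded_iff by auto
  with M show ?case
    by (intro exI[of _ "max M Mj"]) (auto simp: le_max_iff_disj)
qed simp

lemma is_subgradient_add_scaled:
  assumes f: "is_subgradient f x g" and h: "is_subgradient h x g'" and c: "c \<ge> 0"
  shows "is_subgradient (\<lambda>z. f z + c * h z) x (g + c *\<^sub>R g')"
  unfolding is_subgradient_def
proof
  fix y
  have "f x + inner g (y - x) \<le> f y" using f by (simp add: is_subgradient_def)
  moreover have "c * (h x + inner g' (y - x)) \<le> c * h y"
    using h c unfolding is_subgradient_def by (intro mult_left_mono) auto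
  ultimately show "f x + c * h x + inner (g + c *\<^sub>R g') (y - x) \<le> f y + c * h y"
    by (simp add: inner_add_left distrib_left)
qed

lemma is_subgradient_add_scaled_norm_le:
  fixes f h :: "'a::real_inner \<Rightarrow> real"
  assumes sg: "is_subgradient f x g" "is_subgradient h x g'" and x: "norm x \<le> R"
    and bound: "\<And>y. norm y \<le> R + 1 \<Longrightarrow> \<bar>f y\<bar> \<le> M" "\<And>y. norm y \<le> R + 1 \<Longrightarrow> \<bar>h y\<bar> \<le> M"
    and c: "0 \<le> c" "c \<le> \<Lambda>"
  shows "norm (g + c *\<^sub>R g') \<le> 2 * M + \<Lambda> * (2 * M)"
proof -
  have g: "norm g \<le> 2 * M" and g': "norm g' \<le> 2 * M"
    using is_subgradient_norm_le[OF sg(1) x bound(1)] is_subgradient_norm_le[OF sg(2) x bound(2)]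
    by auto
  have "c * norm g' \<le> \<Lambda> * (2 * M)"
    using g' c by (intro mult_mono) auto
  then show ?thesis
    using g c(1) norm_triangle_ineq[of g "c *\<^sub>R g'"] by simp
qed

lemma convex_on_add_scaled_diff_le:
  fixes f h :: "'a::real_normed_vector \<Rightarrow> real"
  assumes convex: "convex_on UNIV f" "convex_on UNIV h" and uv: "norm u \<le> R" "norm v \<le> R"
    and bound: "\<And>y. norm y \<le> R + 1 \<Longrightarrow> \<bar>f y\<bar> \<le> M" "\<And>y. norm y \<le> R + 1 \<Longrightarrow> \<bar>h y\<bar> \<le> M"
    and c: "0 \<le> c" "c \<le> \<Lambda>"
  shows "f u + c * h u - (f v + c * h v) \<le> (2 * M + \<Lambda> * (2 * M)) * norm (u - v)"
proof -
  have f: "f u - f v \<le> 2 * M * norm (u - v)" and h: "h u - h v \<le> 2 * M * norm (u - v)"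
    using convex_on_bounded_imp_diff_le[OF convex(1) uv(2,1) bound(1)]
      convex_on_bounded_imp_diff_le[OF convex(2) uv(2,1) bound(2)] by auto
  have "0 \<le> M" using bound(1)[of u] uv(1) by simp
  then have "c * (h u - h v) \<le> \<Lambda> * (2 * M * norm (u - v))"
    using h c by (intro order_trans[OF mult_left_mono mult_right_mono]) auto
  then show ?thesis
    using f by (simp add: algebra_simps)
qed

lemma cyclic_iterates_in:
  assumes "x 0 0 \<in> X" "\<And>k i. i < m \<Longrightarrow> x k (Suc i) \<in> X" "\<And>k. x (Suc k) 0 = x k m" "i \<le> m"
  shows "x k i \<in> X"
proof -
  have start: "x k 0 \<in> X" for k
  proof (induction k)
    case (Suc k)
    then show ?case
      using assms(2)[of "m - 1" k] assms(3)[of k] by (cases m) auto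
  qed (use assms(1) in simp)
  show ?thesis
    using start assms(2,4) by (cases i) auto
qed

text \<open>The k-th cycle of the method is an incremental subgradient cycle for the components
  fs (i + 1) + (lambda k / m) h, whose sum is the regularized objective F + lambda k h.\<close>

lemma incremental_regularized_epoch_descent:
  fixes X :: "'a::euclidean_space set" and fs :: "nat \<Rightarrow> 'a \<Rightarrow> real"
    and x gf gh :: "nat \<Rightarrow> nat \<Rightarrow> 'a" and gamma lambda :: "nat \<Rightarrow> real"
  assumes X: "compact X" "convex X" "X \<noteq> {}" and m: "m \<ge> 1"
    and f_convex: "\<And>i. 1 \<le> i \<Longrightarrow> i \<le> m \<Longrightarrow> convex_on UNIV (fs i)"
    and h_convex: "convex_on UNIV h"
    and x_in: "\<And>k i. i \<le> m \<Longrightarrow> x k i \<in> X"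
    and subgrad_f: "\<And>k i. i < m \<Longrightarrow> is_subgradient (fs (Suc i)) (x k i) (gf k i)"
    and subgrad_h: "\<And>k i. i < m \<Longrightarrow> is_subgradient h (x k i) (gh k i)"
    and step: "\<And>k i. i < m \<Longrightarrow> x k (Suc i) =
           closest_point X (x k i - gamma k *\<^sub>R (gf k i + (lambda k / real m) *\<^sub>R gh k i))"
    and outer: "\<And>k. x (Suc k) 0 = x k m"
    and gamma: "\<And>k. 0 \<le> gamma k" and lambda: "\<And>k. 0 \<le> lambda k" "\<And>k. lambda k \<le> \<Lambda>"
  shows "\<exists>C. \<forall>k. \<forall>y\<in>X. 2 * gamma k * (((\<Sum>i=1..m. fs i (x k 0)) - (\<Sum>i=1..m. fs i y))
      + lambda k * (h (x k 0) - h y)) \<le> (norm (x k 0 - y))\<^sup>2 - (norm (x (Suc k) 0 - y))\<^sup>2 + C * (gamma k)\<^sup>2"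
proof -
  obtain R where R: "0 < R" "\<And>z. z \<in> X \<Longrightarrow> norm z \<le> R"
    using compact_imp_bounded[OF X(1)] unfolding bounded_pos by blast
  obtain M where M: "\<forall>i\<in>{0..m}. \<forall>y. norm y \<le> R + 1 \<longrightarrow> \<bar>(if i = 0 then h else fs i) y\<bar> \<le> M"
    using convex_on_family_bounded_on_cball[of "{0..m}" "\<lambda>i. if i = 0 then h else fs i"]
      f_convex h_convex by fastforce
  have f_bound: "\<bar>fs (Suc i) y\<bar> \<le> M" if "i < m" "norm y \<le> R + 1" for i y
    using M[rule_format, of "Suc i" y] that by simp
  have h_bound: "\<bar>h y\<bar> \<le> M" if "norm y \<le> R + 1" for y
    using M[rule_format, of 0 y] that by simp
  define G where "G = 2 * M + \<Lambda> * (2 * M)"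
  define c where "c k = lambda k / real m" for k
  have c: "0 \<le> c k" "c k \<le> \<Lambda>" for k
  proof -
    show "0 \<le> c k" using lambda(1)[of k] by (simp add: c_def)
    have "lambda k * 1 \<le> lambda k * real m" using lambda(1)[of k] m by (intro mult_left_mono) auto
    then have "c k \<le> lambda k" using m by (simp add: c_def divide_le_eq)
    then show "c k \<le> \<Lambda>" using lambda(2)[of k] by linarith
  qed
  have cycle: "(norm (x k m - y))\<^sup>2 \<le> (norm (x k 0 - y))\<^sup>2
      - 2 * gamma k * (\<Sum>i<m. (fs (Suc i) (x k 0) + c k * h (x k 0)) - (fs (Suc i) y + c k * h y))
      + real m * (2 * real m + 1) * (gamma k)\<^sup>2 * G\<^sup>2" if y: "y \<in> X" for k y
  proof (rule incremental_cycle_descent[where g = "\<lambda>i. gf k i + c k *\<^sub>R gh k i"])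
    show "convex X" "closed X" "X \<noteq> {}" "x k 0 \<in> X" "y \<in> X" "0 \<le> gamma k"
      using X compact_imp_closed x_in y gamma by auto
    fix i assume i: "i < m"
    show "x k (Suc i) = closest_point X (x k i - gamma k *\<^sub>R (gf k i + c k *\<^sub>R gh k i))"
      using step[OF i] by (simp add: c_def)
    show "is_subgradient (\<lambda>z. fs (Suc i) z + c k * h z) (x k i) (gf k i + c k *\<^sub>R gh k i)"
      using subgrad_f[OF i] subgrad_h[OF i] c(1) by (rule is_subgradient_add_scaled)
    show "norm (gf k i + c k *\<^sub>R gh k i) \<le> G"
      unfolding G_def using R(2)[OF x_in[of i k]] i
      by (intro is_subgradient_add_scaled_norm_le[OF subgrad_f[OF i] subgrad_h[OF i] _
            f_bound[OF i] h_bound c]) auto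
    show "fs (Suc i) u + c k * h u - (fs (Suc i) v + c k * h v) \<le> G * norm (u - v)"
      if "u \<in> X" "v \<in> X" for u v
      unfolding G_def using i
      by (intro convex_on_add_scaled_diff_le[OF f_convex h_convex R(2) R(2) f_bound[OF i] h_bound c]
          that) auto
  qed
  have "(\<Sum>i<m. (fs (Suc i) z + c k * h z)) = (\<Sum>i=1..m. fs i z) + lambda k * h z" for k z
    using sum.atLeast1_atMost_eq[of "\<lambda>i. fs i z" m] m by (simp add: sum.distrib c_def)
  then have gaps: "(\<Sum>i<m. (fs (Suc i) (x k 0) + c k * h (x k 0)) - (fs (Suc i) y + c k * h y))
      = ((\<Sum>i=1..m. fs i (x k 0)) - (\<Sum>i=1..m. fs i y)) + lambda k * (h (x k 0) - h y)" for k y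
    by (simp add: sum_subtractf algebra_simps)
  show ?thesis
  proof (intro exI allI ballI)
    fix k y assume "y \<in> X"
    moreover have "real m * (2 * real m + 1) * (gamma k)\<^sup>2 * G\<^sup>2
        = real m * (2 * real m + 1) * G\<^sup>2 * (gamma k)\<^sup>2"
      by simp
    ultimately show "2 * gamma k * (((\<Sum>i=1..m. fs i (x k 0)) - (\<Sum>i=1..m. fs i y))
        + lambda k * (h (x k 0) - h y)) \<le> (norm (x k 0 - y))\<^sup>2 - (norm (x (Suc k) 0 - y))\<^sup>2
        + real m * (2 * real m + 1) * G\<^sup>2 * (gamma k)\<^sup>2"
      using cycle[of y k] unfolding gaps outer by linarith
  qed
qed

lemma incremental_regularized_averaged_gaps_eventually_less:
  fixes X :: "'a::euclidean_space set" and fs :: "nat \<Rightarrow> 'a \<Rightarrow> real"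
    and x gf gh :: "nat \<Rightarrow> nat \<Rightarrow> 'a" and gamma lambda :: "nat \<Rightarrow> real"
  assumes gamma_def: "\<And>k. gamma k = gamma0 / (real k + 1) powr a"
    and lambda_def: "\<And>k. lambda k = lambda0 / (real k + 1) powr b"
    and params: "a > 0" "b > 0" "gamma0 > 0" "lambda0 > 0" "r < 1"
    and rates: "b < a" "a + b < 1" "a * r \<le> 1"
    and X: "compact X" "convex X" "X \<noteq> {}" and m: "m \<ge> 1"
    and f_convex: "\<And>i. 1 \<le> i \<Longrightarrow> i \<le> m \<Longrightarrow> convex_on UNIV (fs i)"
    and h_convex: "convex_on UNIV h"
    and x_in: "\<And>k i. i \<le> m \<Longrightarrow> x k i \<in> X"
    and subgrad_f: "\<And>k i. i < m \<Longrightarrow> is_subgradient (fs (Suc i)) (x k i) (gf k i)"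
    and subgrad_h: "\<And>k i. i < m \<Longrightarrow> is_subgradient h (x k i) (gh k i)"
    and step: "\<And>k i. i < m \<Longrightarrow> x k (Suc i) =
           closest_point X (x k i - gamma k *\<^sub>R (gf k i + (lambda k / real m) *\<^sub>R gh k i))"
    and outer: "\<And>k. x (Suc k) 0 = x k m"
    and xh: "xh \<in> X" "\<And>z. z \<in> X \<Longrightarrow> (\<Sum>i=1..m. fs i xh) \<le> (\<Sum>i=1..m. fs i z)"
    and eps: "\<epsilon> > 0"
  shows "\<forall>\<^sub>F N in sequentially.
    (\<Sum>k<N. gamma k powr r * ((\<Sum>i=1..m. fs i (x k 0)) - (\<Sum>i=1..m. fs i xh))) / (\<Sum>k<N. gamma k powr r)
      < \<epsilon> \<and>
    (\<Sum>k<N. gamma k powr r * (h (x k 0) - h xh)) / (\<Sum>k<N. gamma k powr r) < \<epsilon>"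
proof -
  have gamma_pos: "0 < gamma k" and lambda_pos: "0 < lambda k" and lambda_le: "lambda k \<le> lambda0"
    for k
    using params by (auto simp: gamma_def lambda_def divide_le_eq ge_one_powr_ge_zero)
  obtain C where descent: "\<And>k. 2 * gamma k * (((\<Sum>i=1..m. fs i (x k 0)) - (\<Sum>i=1..m. fs i xh))
      + lambda k * (h (x k 0) - h xh))
      \<le> (norm (x k 0 - xh))\<^sup>2 - (norm (x (Suc k) 0 - xh))\<^sup>2 + C * (gamma k)\<^sup>2"
    using incremental_regularized_epoch_descent[where fs = fs and h = h and x = x and gamma = gamma,
        OF X m f_convex h_convex x_in subgrad_f subgrad_h step outer
        less_imp_le[OF gamma_pos] less_imp_le[OF lambda_pos] lambda_le] xh(1)
    by blast
  obtain H where H: "\<And>z. z \<in> X \<Longrightarrow> \<bar>h z\<bar> \<le> H"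
    using compact_imp_bounded[OF compact_continuous_image[OF
        continuous_on_subset[OF convex_on_continuous[OF open_UNIV h_convex]] X(1)]]
    unfolding bounded_iff by auto
  have "(norm (x k 0 - xh))\<^sup>2 \<le> (diameter X)\<^sup>2" for k
    using diameter_bounded_bound[OF compact_imp_bounded[OF X(1)] x_in[of 0 k] xh(1)]
    by (intro power_mono) (auto simp: dist_norm)
  moreover have "\<bar>h (x k 0) - h xh\<bar> \<le> 2 * H" for k
    using H[OF x_in[of 0 k]] H[OF xh(1)] by arith
  ultimately show ?thesis
    using xh(2) x_in
    by (intro averaged_gaps_eventually_less[OF gamma_def lambda_def params rates _ _ descent _ _ eps]) auto
qed

theorem theorem1:
  fixes X :: "'a::euclidean_space set"
    and m :: nat
    and fs :: "nat \<Rightarrow> 'a \<Rightarrow> real"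
    and h :: "'a \<Rightarrow> real"
    and mu_h a b gamma0 lambda0 r :: real
    and xh :: 'a
    and x :: "nat \<Rightarrow> nat \<Rightarrow> 'a"
    and gf gh :: "nat \<Rightarrow> nat \<Rightarrow> 'a"
    and gamma lambda :: "nat \<Rightarrow> real"
    and xbar :: "nat \<Rightarrow> 'a"
  assumes gamma_def: "\<And>k. gamma k = gamma0 / (real k + 1) powr a"
    and lambda_def: "\<And>k. lambda k = lambda0 / (real k + 1) powr b"
    and xbar_def: "\<And>N. N \<ge> 1 \<Longrightarrow> xbar N = (\<Sum>k<N. gamma k powr r *\<^sub>R x k 0) /\<^sub>R (\<Sum>k<N. gamma k powr r)"
    and X: "X \<noteq> {}" "compact X" "convex X"
    and m: "m \<ge> 1"
    and f_convex: "\<And>i. 1 \<le> i \<Longrightarrow> i \<le> m \<Longrightarrow> convex_on UNIV (fs i)"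
    and h_sc: "mu_h > 0" "strongly_convex mu_h h"
    and xh: "xh \<in> argmin_set (\<lambda>z. \<Sum>i=1..m. fs i z) X"
           "\<forall>y\<in>argmin_set (\<lambda>z. \<Sum>i=1..m. fs i z) X. h xh \<le> h y"
    and params: "a > 0" "b > 0" "gamma0 > 0" "lambda0 > 0"
           "gamma0 * lambda0 \<le> 2 * real m / mu_h" "r < 1"
    and x0: "x 0 0 \<in> X"
    and subgrad_f: "\<And>k i. i < m \<Longrightarrow> is_subgradient (fs (Suc i)) (x k i) (gf k i)"
    and subgrad_h: "\<And>k i. i < m \<Longrightarrow> is_subgradient h (x k i) (gh k i)"
    and step: "\<And>k i. i < m \<Longrightarrow> x k (Suc i) =
           closest_point X (x k i - gamma k *\<^sub>R (gf k i + (lambda k / real m) *\<^sub>R gh k i))"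
    and outer: "\<And>k. x (Suc k) 0 = x k m"
    and rates: "a > b" "a > 1/2" "a + b < 1" "a * r \<le> 1"
  shows "xbar \<longlonglongrightarrow> xh"
proof -
  define F where "F = (\<lambda>z. \<Sum>i=1..m. fs i z)"
  have x_in: "x k i \<in> X" if "i \<le> m" for k i
    using cyclic_iterates_in[OF x0 _ outer that] step X(2)
      closest_point_in_set[OF compact_imp_closed X(1)] by simp
  have F_convex: "convex_on UNIV F"
    unfolding F_def by (rule convex_on_sum_fun) (use f_convex in auto)
  have h_convex: "convex_on UNIV h"
    using strongly_convex_imp_convex_on[OF less_imp_le[OF h_sc(1)] h_sc(2)] .
  have xh_X: "xh \<in> X" and F_min: "\<And>z. z \<in> X \<Longrightarrow> F xh \<le> F z"
    using xh(1) by (auto simp: argmin_set_def F_def)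
  have unique: "z = xh" if "z \<in> X" "F z \<le> F xh" "h z \<le> h xh" for z
    using strongly_convex_argmin_unique[OF X(3) convex_on_subset[OF F_convex] h_sc] xh that X(3)
    unfolding F_def by auto
  have gaps_small: "\<forall>\<^sub>F N in sequentially.
      (\<Sum>k<N. gamma k powr r * (F (x k 0) - F xh)) / (\<Sum>k<N. gamma k powr r) < \<epsilon> \<and>
      (\<Sum>k<N. gamma k powr r * (h (x k 0) - h xh)) / (\<Sum>k<N. gamma k powr r) < \<epsilon>"
    if "\<epsilon> > 0" for \<epsilon>
    unfolding F_def
    using incremental_regularized_averaged_gaps_eventually_less[OF gamma_def lambda_def params(1-4,6)
        rates(1,3,4) X(2,3,1) m f_convex h_convex x_in subgrad_f subgrad_h step outer xh_X
        F_min[unfolded F_def] that] .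
  have "(\<lambda>N. (\<Sum>k<N. gamma k powr r *\<^sub>R x k 0) /\<^sub>R (\<Sum>k<N. gamma k powr r)) \<longlonglongrightarrow> xh"
    using params(3)
    by (intro weighted_average_tendsto_of_vanishing_gaps[OF X(2,3) F_convex h_convex xh_X unique x_in
        _ gaps_small]) (auto simp: gamma_def)
  then show ?thesis
    by (rule Lim_transform_eventually)
      (use eventually_ge_at_top[of 1] in \<open>eventually_elim, simp add: xbar_def\<close>)
qed

end
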